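(* Let $a=1$. Define $\boldsymbol{\alpha}_0=\boldsymbol{\beta}_0=1$ and, for $n\ge1$, \[ \boldsymbol{\alpha}_n(1,k)=(-1)^n(q^{-n}+q^{n}),\qquad \boldsymbol{\beta}_n(1,k)=(-1)^n\frac{(k^2;q^2)_{n}(1+kq^{2n})}{(1+k)q^n(q^2;q^2)_n}. \] Then $(\boldsymbol{\alpha}_n(1,k),\boldsymbol{\beta}_n(1,k))$ is a WP-Bailey pair relative to $a=1$.
   Context: Notation: $(x;q)_n=\prod_{i=0}^{n-1}(1-xq^i)$. A pair of sequences $(\boldsymbol{\alpha}_n(a,k,q),\boldsymbol{\beta}_n(a,k,q))_{n\ge0}$ is a WP-Bailey pair (relative to $a$, with parameter $k$) if $\boldsymbol{\alpha}_0=1$ and for all $n\ge0$ \[\boldsymbol{\beta}_n=\sum_{j=0}^n\frac{(k/a;q)_{n-j}(k;q)_{n+j}}{(q;q)_{n-j}(aq;q)_{n+j}}\boldsymbol{\alpha}_j.\] *)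

theory Defs
  imports Complex_Main
begin

definition qpoch :: "'a::comm_ring_1 \<Rightarrow> 'a \<Rightarrow> nat \<Rightarrow> 'a" where
  "qpoch x q n = (\<Prod>i<n. 1 - x * q ^ i)"

definition WP_Bailey_pair ::
  "'a::field \<Rightarrow> 'a \<Rightarrow> 'a \<Rightarrow> (nat \<Rightarrow> 'a) \<Rightarrow> (nat \<Rightarrow> 'a) \<Rightarrow> bool" where
  "WP_Bailey_pair a k q \<alpha> \<beta> \<longleftrightarrow>
     \<alpha> 0 = 1 \<and>
     (\<forall>n. \<beta> n = (\<Sum>j=0..n.
        (qpoch (k / a) q (n - j) * qpoch k q (n + j)) /
        (qpoch q q (n - j) * qpoch (a * q) q (n + j)) * \<alpha> j))"

end

theory Submission
  imports Defs "HOL-Computational_Algebra.Formal_Laurent_Series"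
begin

text \<open>
  Put \<open>c\<^sub>i = (k;q)\<^sub>i / (q;q)\<^sub>i\<close> and \<open>A(x) = \<Sum> c\<^sub>i x\<^sup>i\<close>,
  formally \<open>(kx;q)\<^sub>\<infinity> / (x;q)\<^sub>\<infinity>\<close>. Pairing the terms \<open>i = n \<plusminus> j\<close> of the
  Cauchy product shows that the WP-Bailey sum of \<open>\<alpha>\<^sub>j(1,k)\<close>, multiplied by \<open>(-q)\<^sup>n\<close>,
  is the coefficient of \<open>x\<^sup>2\<^sup>n\<close> in \<open>A(-qx) A(x)\<close>.
  Since \<open>(1 - kx) A(qx) = (1 - x) A(x)\<close>, both \<open>(1 + kx) A(-qx) A(x)\<close> and
  \<open>(1 + x) G(x\<^sup>2)\<close>, where \<open>G(y) = \<Sum> (k\<^sup>2;q\<^sup>2)\<^sub>i / (q\<^sup>2;q\<^sup>2)\<^sub>i y\<^sup>i\<close>, solve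
  \<open>(1 - k\<^sup>2x\<^sup>2) F(qx) = (1 + qx)(1 - x) F(x)\<close>. When \<open>q\<close> is not a root of unity this
  q-difference equation determines \<open>F\<close> from \<open>F(0)\<close>. Hence
  \<open>A(-qx) A(x) = (1 + x) G(x\<^sup>2) / (1 + kx)\<close>, whose even coefficients are the stated \<open>\<beta>\<^sub>n\<close>.
\<close>

unbundle fps_syntax

definition fps_dilate :: "'a::comm_ring_1 \<Rightarrow> 'a fps \<Rightarrow> 'a fps" where
  "fps_dilate c F = F oo (fps_const c * fps_X)"

lemma fps_dilate_nth [simp]: "fps_dilate c F $ n = c ^ n * F $ n"
  by (simp add: fps_dilate_def)

lemma fps_dilate_const [simp]: "fps_dilate c (fps_const a) = fps_const a"
  by (simp add: fps_dilate_def)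

lemma fps_dilate_one [simp]: "fps_dilate c 1 = 1"
  by (simp add: fps_dilate_def)

lemma fps_dilate_X [simp]: "fps_dilate c fps_X = fps_const c * fps_X"
  by (simp add: fps_dilate_def)

lemma fps_dilate_const_mult [simp]: "fps_dilate c (fps_const a * F) = fps_const a * fps_dilate c F"
  by (simp add: fps_dilate_def fps_const_mult_apply_left)

lemma fps_dilate_add [simp]: "fps_dilate c (F + G) = fps_dilate c F + fps_dilate c G"
  by (simp add: fps_dilate_def fps_compose_add_distrib)

lemma fps_dilate_diff [simp]: "fps_dilate c (F - G) = fps_dilate c F - fps_dilate c G"
  by (simp add: fps_dilate_def fps_compose_sub_distrib)

lemma fps_dilate_mult [simp]:
  fixes F G :: "'a::idom fps"
  shows "fps_dilate c (F * G) = fps_dilate c F * fps_dilate c G"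
  by (simp add: fps_dilate_def fps_compose_mult_distrib)

lemma fps_dilate_dilate: "fps_dilate c (fps_dilate d F) = fps_dilate (c * d) F"
  by (simp add: fps_eq_iff power_mult_distrib)

lemma fps_dilate_compose_X_power:
  "fps_dilate c (H oo fps_X ^ d) = fps_dilate (c ^ d) H oo fps_X ^ d"
  by (auto simp: fps_eq_iff fps_nth_compose_X_power power_mult[symmetric])

lemma qpoch_0 [simp]: "qpoch x q 0 = 1"
  by (simp add: qpoch_def)

lemma qpoch_Suc: "qpoch x q (Suc n) = qpoch x q n * (1 - x * q ^ n)"
  by (simp add: qpoch_def)

lemma qpoch_self_nonzero:
  fixes q :: "'a::idom"
  assumes "\<And>m::nat. m \<ge> 1 \<Longrightarrow> q ^ m \<noteq> 1"
  shows "qpoch q q n \<noteq> 0"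
  using assms[of "Suc _"] by (induction n) (auto simp: qpoch_Suc)

lemma power_not_root_of_unity:
  fixes q :: "'a::monoid_mult"
  assumes "\<And>m::nat. m \<ge> 1 \<Longrightarrow> q ^ m \<noteq> 1" and "d > 0" and "m \<ge> 1"
  shows "(q ^ d) ^ m \<noteq> 1"
  using assms(1)[of "d * m"] assms(2,3) by (simp add: power_mult)

lemma qdifference_solution_unique:
  fixes q :: "'a::idom" and P Q F G :: "'a fps"
  assumes q: "\<And>m::nat. m \<ge> 1 \<Longrightarrow> q ^ m \<noteq> 1"
    and "P $ 0 = 1" "Q $ 0 = 1"
    and "P * fps_dilate q F = Q * F" "P * fps_dilate q G = Q * G"
    and "F $ 0 = G $ 0"
  shows "F = G"
proof -
  define D where "D = F - G"
  have D_eq: "P * fps_dilate q D = Q * D"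
    using assms(4,5) by (simp add: D_def algebra_simps)
  have "D $ m = 0" for m
  proof (induction m rule: less_induct)
    case (less m)
    have lower: "(\<Sum>i=0..m. c ^ i * D $ i * R $ (m - i)) = c ^ m * D $ m * R $ 0" for R c
    proof -
      have "(\<Sum>i=0..m. c ^ i * D $ i * R $ (m - i)) = (\<Sum>i\<in>{m}. c ^ i * D $ i * R $ (m - i))"
        using less by (intro sum.mono_neutral_right) auto
      then show ?thesis by simp
    qed
    have "fps_dilate q D * P = D * Q"
      using D_eq by (simp add: mult.commute)
    then have "q ^ m * D $ m = D $ m"
      using lower[of q P] lower[of 1 Q] assms(2,3) by (simp add: fps_mult_nth fps_eq_iff)
    then show ?case
      using q[of m] assms(6) by (cases "m = 0") (auto simp: D_def)
  qed
  then show ?thesis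
    by (simp add: D_def fps_eq_iff)
qed

definition qbinomial_series :: "'a::field \<Rightarrow> 'a \<Rightarrow> 'a fps" where
  "qbinomial_series a q = Abs_fps (\<lambda>n. qpoch a q n / qpoch q q n)"

lemma qbinomial_series_nth_Suc:
  fixes a q :: "'a::field"
  assumes "qpoch q q (Suc n) \<noteq> 0"
  shows "qbinomial_series a q $ Suc n * (1 - q ^ Suc n) = qbinomial_series a q $ n * (1 - a * q ^ n)"
  using assms by (simp add: qbinomial_series_def qpoch_Suc field_simps)

lemma qbinomial_series_qdifference:
  fixes a q :: "'a::field"
  assumes "\<And>m::nat. m \<ge> 1 \<Longrightarrow> q ^ m \<noteq> 1"
  shows "(1 - fps_const a * fps_X) * fps_dilate q (qbinomial_series a q)
           = (1 - fps_X) * qbinomial_series a q"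
proof (rule fps_ext)
  fix m
  show "((1 - fps_const a * fps_X) * fps_dilate q (qbinomial_series a q)) $ m
          = ((1 - fps_X) * qbinomial_series a q) $ m"
  proof (cases m)
    case 0
    then show ?thesis by (simp add: qbinomial_series_def)
  next
    case (Suc n)
    then show ?thesis
      using qbinomial_series_nth_Suc[OF qpoch_self_nonzero[OF assms], of a n]
      by (simp add: algebra_simps)
  qed
qed

lemma qdifference_reflected_product:
  fixes k q :: "'a::idom" and A :: "'a fps"
  assumes A: "(1 - fps_const k * fps_X) * fps_dilate q A = (1 - fps_X) * A"
  defines "F \<equiv> (1 + fps_const k * fps_X) * (fps_dilate (-q) A * A)"
  shows "(1 - fps_const (k^2) * fps_X^2) * fps_dilate q F = (1 + fps_const q * fps_X) * (1 - fps_X) * F"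
proof -
  define B where "B = fps_dilate (-q) A"
  have B: "(1 + fps_const k * fps_const q * fps_X) * fps_dilate q B = (1 + fps_const q * fps_X) * B"
  proof -
    have "(1 + fps_const k * fps_const q * fps_X) * fps_dilate q B
        = fps_dilate (-q) ((1 - fps_const k * fps_X) * fps_dilate q A)"
      by (simp add: B_def fps_dilate_dilate fps_const_neg[symmetric] algebra_simps del: fps_const_neg)
    also have "\<dots> = (1 + fps_const q * fps_X) * B"
      by (simp add: A B_def)
    finally show ?thesis .
  qed
  have "(1 - fps_const (k^2) * fps_X^2) * fps_dilate q F
      = (1 + fps_const k * fps_X) * ((1 + fps_const k * fps_const q * fps_X) * fps_dilate q B)
          * ((1 - fps_const k * fps_X) * fps_dilate q A)"
    by (simp add: F_def B_def[symmetric] fps_const_power[symmetric] fps_const_mult[symmetric]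
        algebra_simps power2_eq_square del: fps_const_power fps_const_mult)
  also have "\<dots> = (1 + fps_const q * fps_X) * (1 - fps_X) * F"
    by (simp only: A B) (simp add: F_def B_def algebra_simps)
  finally show ?thesis .
qed

lemma qdifference_compose_X_power:
  fixes H :: "'a::idom fps"
  assumes "d > 0" and "(1 - fps_const a * fps_X) * fps_dilate (q ^ d) H = (1 - fps_X) * H"
  shows "(1 - fps_const a * fps_X ^ d) * fps_dilate q (H oo fps_X ^ d)
           = (1 - fps_X ^ d) * (H oo fps_X ^ d)"
proof -
  have X0: "(fps_X ^ d :: 'a fps) $ 0 = 0"
    using \<open>d > 0\<close> by simp
  have "((1 - fps_const a * fps_X) * fps_dilate (q ^ d) H) oo fps_X ^ d = ((1 - fps_X) * H) oo fps_X ^ d"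
    using assms(2) by simp
  then show ?thesis
    by (simp add: fps_compose_mult_distrib[OF X0] fps_X_fps_compose_startby0[OF X0]
        fps_compose_sub_distrib fps_dilate_compose_X_power fps_const_mult_apply_left[symmetric])
qed

lemma reflected_qbinomial_product:
  fixes k q :: "'a::field"
  assumes q: "\<And>m::nat. m \<ge> 1 \<Longrightarrow> q ^ m \<noteq> 1"
  shows "(1 + fps_const k * fps_X) * (fps_dilate (-q) (qbinomial_series k q) * qbinomial_series k q)
           = (1 + fps_X) * (qbinomial_series (k^2) (q^2) oo fps_X^2)"
proof (rule qdifference_solution_unique[OF q])
  show "(1 - fps_const (k^2) * fps_X^2) * fps_dilate q
          ((1 + fps_const k * fps_X) * (fps_dilate (-q) (qbinomial_series k q) * qbinomial_series k q))
      = ((1 + fps_const q * fps_X) * (1 - fps_X))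
          * ((1 + fps_const k * fps_X) * (fps_dilate (-q) (qbinomial_series k q) * qbinomial_series k q))"
    by (rule qdifference_reflected_product[OF qbinomial_series_qdifference[OF q]])
  define G where "G = qbinomial_series (k^2) (q^2) oo fps_X^2"
  have G: "(1 - fps_const (k^2) * fps_X^2) * fps_dilate q G = (1 - fps_X^2) * G"
    unfolding G_def
    by (intro qdifference_compose_X_power qbinomial_series_qdifference power_not_root_of_unity[OF q]) auto
  have "(1 - fps_const (k^2) * fps_X^2) * fps_dilate q ((1 + fps_X) * G)
      = (1 + fps_const q * fps_X) * ((1 - fps_const (k^2) * fps_X^2) * fps_dilate q G)"
    by (simp add: algebra_simps)
  also have "\<dots> = ((1 + fps_const q * fps_X) * (1 - fps_X)) * ((1 + fps_X) * G)"
    by (simp only: G) (simp add: algebra_simps power2_eq_square)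
  finally show "(1 - fps_const (k^2) * fps_X^2) * fps_dilate q ((1 + fps_X) * G)
      = ((1 + fps_const q * fps_X) * (1 - fps_X)) * ((1 + fps_X) * G)" .
qed (simp_all add: qbinomial_series_def)

lemma even_coeff_of_linear_quotient:
  fixes E H :: "'a::field fps" and k p :: 'a
  assumes eq: "(1 + fps_const k * fps_X) * E = (1 + fps_X) * (H oo fps_X^2)"
    and k: "1 + k \<noteq> 0"
    and H: "\<And>n. H $ Suc n * (1 - p ^ Suc n) = H $ n * (1 - k^2 * p ^ n)"
  shows "E $ (2*n) = H $ n * (1 + k * p ^ n) / (1 + k)"
proof -
  define G where "G = H oo fps_X^2"
  have G_even: "G $ (2*n) = H $ n" and G_odd: "G $ Suc (2*n) = 0" for n
    by (simp_all add: G_def fps_nth_compose_X_power)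
  have E_Suc: "E $ Suc m = G $ Suc m + G $ m - k * E $ m" for m
    using arg_cong[where f = "\<lambda>F. F $ Suc m", OF eq]
    by (simp add: G_def[symmetric] distrib_right mult.assoc eq_diff_eq)
  have E_odd: "E $ Suc (2*n) = H $ n * (1 - k^2 * p ^ n) / (1 + k)"
    if "E $ (2*n) = H $ n * (1 + k * p ^ n) / (1 + k)" for n
  proof -
    have "E $ Suc (2*n) = H $ n - k * (H $ n * (1 + k * p ^ n) / (1 + k))"
      by (simp add: E_Suc G_even G_odd that)
    also have "\<dots> = H $ n * (1 - k^2 * p ^ n) / (1 + k)"
      using k by (simp add: field_simps power2_eq_square)
    finally show ?thesis .
  qed
  show ?thesis
  proof (induction n)
    case 0
    show ?case
      using arg_cong[where f = "\<lambda>F. F $ 0", OF eq] k by (simp add: fps_nth_compose_X_power)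
  next
    case (Suc n)
    have "E $ (2 * Suc n) = H $ Suc n - k * (H $ n * (1 - k^2 * p ^ n) / (1 + k))"
      using E_odd[OF Suc] E_Suc[of "Suc (2*n)"] G_even[of "Suc n"] G_odd[of n] by simp
    also have "\<dots> = H $ Suc n * (1 + k * p ^ Suc n) / (1 + k)"
      unfolding H[symmetric] using k by (simp add: field_simps)
    finally show ?case .
  qed
qed

lemma reflected_qbinomial_product_even_coeff:
  fixes k q :: "'a::field"
  assumes q: "\<And>m::nat. m \<ge> 1 \<Longrightarrow> q ^ m \<noteq> 1" and k: "k \<noteq> -1"
  shows "(fps_dilate (-q) (qbinomial_series k q) * qbinomial_series k q) $ (2*n)
           = qpoch (k^2) (q^2) n / qpoch (q^2) (q^2) n * (1 + k * q ^ (2*n)) / (1 + k)"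
proof -
  have "1 + k \<noteq> 0"
    using k by (metis add.commute add_eq_0_iff)
  moreover have "qbinomial_series (k^2) (q^2) $ Suc m * (1 - (q^2) ^ Suc m)
      = qbinomial_series (k^2) (q^2) $ m * (1 - k^2 * (q^2) ^ m)" for m
    by (intro qbinomial_series_nth_Suc qpoch_self_nonzero power_not_root_of_unity[OF q]) auto
  ultimately show ?thesis
    using even_coeff_of_linear_quotient[OF reflected_qbinomial_product[OF q]]
    by (simp add: qbinomial_series_def power_mult)
qed

lemma sum_atLeast0_atMost_double:
  fixes f :: "nat \<Rightarrow> 'a::comm_monoid_add"
  shows "(\<Sum>i=0..2*n. f i) = f n + (\<Sum>j=1..n. f (n + j) + f (n - j))"
proof -
  have "(\<Sum>i=0..2*n. f i) = (\<Sum>i<n. f i) + (\<Sum>i=n..2*n. f i)"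
    by (metis atLeast0LessThan atLeastLessThanSuc_atLeastAtMost sum.atLeastLessThan_concat
        le_add2 mult_2 le0 le_SucI)
  also have "(\<Sum>i<n. f i) = (\<Sum>j=1..n. f (n - j))"
    by (rule sum.reindex_bij_witness[of _ "\<lambda>j. n - j" "\<lambda>i. n - i"]) auto
  also have "(\<Sum>i=n..2*n. f i) = f n + (\<Sum>j=1..n. f (n + j))"
    using sum.shift_bounds_cl_nat_ivl[of f 0 n n] by (simp add: mult_2 sum.atLeast_Suc_atMost add.commute)
  finally show ?thesis
    by (simp add: sum.distrib ac_simps)
qed

definition alpha_one :: "'a::field \<Rightarrow> nat \<Rightarrow> 'a" where
  "alpha_one q n = (if n = 0 then 1 else (-1) ^ n * (inverse (q ^ n) + q ^ n))"

lemma power_minus_reflect: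
  fixes q :: "'a::field"
  assumes "q \<noteq> 0" and "1 \<le> j" "j \<le> n"
  shows "(-q) ^ (n + j) + (-q) ^ (n - j) = (-q) ^ n * alpha_one q j"
proof -
  define m where "m = n - j"
  have n: "n = m + j"
    using \<open>j \<le> n\<close> by (simp add: m_def)
  define s :: 'a where "s = (-1) ^ j"
  have s: "s * s = 1"
    by (simp add: s_def)
  have minus_q: "(-q) ^ j = s * q ^ j"
    unfolding s_def by (rule power_minus)
  have "(-q) ^ (n + j) + (-q) ^ (n - j) = (-q) ^ m * ((-q) ^ j * (-q) ^ j + 1)"
    by (simp add: n power_add distrib_left)
  also have "\<dots> = (-q) ^ m * ((s * s) * (q ^ j * q ^ j) + 1)"
    by (simp add: minus_q mult_ac)
  also have "\<dots> = (-q) ^ m * ((s * s) * (q ^ j * (inverse (q ^ j) + q ^ j)))"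
    using \<open>q \<noteq> 0\<close> by (simp add: s distrib_left add.commute)
  also have "\<dots> = (-q) ^ n * alpha_one q j"
    using \<open>1 \<le> j\<close> unfolding alpha_one_def s_def[symmetric] by (simp add: n power_add minus_q mult_ac)
  finally show ?thesis .
qed

lemma sum_reflected_convolution:
  fixes q :: "'a::field" and c :: "nat \<Rightarrow> 'a"
  assumes "q \<noteq> 0"
  shows "(\<Sum>i=0..2*n. (-q) ^ i * c i * c (2*n - i))
           = (-q) ^ n * (\<Sum>j=0..n. c (n - j) * c (n + j) * alpha_one q j)"
proof -
  define f where "f i = (-q) ^ i * c i * c (2*n - i)" for i
  define g where "g j = c (n - j) * c (n + j) * alpha_one q j" for j
  have pair: "f (n + j) + f (n - j) = (-q) ^ n * g j" if "j \<in> {1..n}" for j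
  proof -
    have "2*n - (n + j) = n - j" "2*n - (n - j) = n + j"
      using that by auto
    then have "f (n + j) + f (n - j) = c (n - j) * c (n + j) * ((-q) ^ (n + j) + (-q) ^ (n - j))"
      by (simp add: f_def algebra_simps)
    then show ?thesis
      using power_minus_reflect[OF assms, of j n] that by (simp add: g_def mult_ac)
  qed
  have "(\<Sum>i=0..2*n. f i) = f n + (\<Sum>j=1..n. (-q) ^ n * g j)"
    by (simp add: sum_atLeast0_atMost_double pair)
  also have "\<dots> = (-q) ^ n * (g 0 + (\<Sum>j=1..n. g j))"
    by (simp add: f_def g_def alpha_one_def distrib_left sum_distrib_left mult_2)
  also have "\<dots> = (-q) ^ n * (\<Sum>j=0..n. g j)"
    by (simp add: sum.atLeast_Suc_atMost[of 0 n])
  finally show ?thesis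
    by (simp add: f_def g_def)
qed

lemma WP_Bailey_sum_alpha_one:
  fixes k q :: "'a::field"
  assumes q0: "q \<noteq> 0" and q: "\<And>m::nat. m \<ge> 1 \<Longrightarrow> q ^ m \<noteq> 1" and k: "k \<noteq> -1"
  shows "(\<Sum>j=0..n. qpoch k q (n - j) * qpoch k q (n + j) / (qpoch q q (n - j) * qpoch q q (n + j))
              * alpha_one q j)
           = (-1) ^ n * (qpoch (k^2) (q^2) n * (1 + k * q ^ (2*n)))
               / ((1 + k) * q ^ n * qpoch (q^2) (q^2) n)"
    (is "?S = _")
proof -
  define c where "c i = qpoch k q i / qpoch q q i" for i
  have "?S = (\<Sum>j=0..n. c (n - j) * c (n + j) * alpha_one q j)"
    by (simp add: c_def)
  then have "(-q) ^ n * ?S = (\<Sum>i=0..2*n. (-q) ^ i * c i * c (2*n - i))"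
    by (simp add: sum_reflected_convolution[OF q0])
  also have "\<dots> = (fps_dilate (-q) (qbinomial_series k q) * qbinomial_series k q) $ (2*n)"
    by (simp add: fps_mult_nth qbinomial_series_def c_def mult.assoc)
  also have "\<dots> = qpoch (k^2) (q^2) n / qpoch (q^2) (q^2) n * (1 + k * q ^ (2*n)) / (1 + k)"
    by (rule reflected_qbinomial_product_even_coeff[OF q k])
  finally have S: "(-q) ^ n * ?S = \<dots>" .
  define s :: 'a where "s = (-1) ^ n"
  have s: "s * s = 1"
    by (simp add: s_def)
  have "?S = s * ((-q) ^ n * ?S) / q ^ n"
    using q0 unfolding power_minus[of q] s_def[symmetric] by (simp add: s flip: mult.assoc)
  also have "\<dots> = s * (qpoch (k^2) (q^2) n * (1 + k * q ^ (2*n))) / ((1 + k) * q ^ n * qpoch (q^2) (q^2) n)"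
    unfolding S by (simp add: field_simps)
  finally show ?thesis
    by (simp add: s_def)
qed

theorem mainTheorem8:
  fixes q k :: complex
  assumes "q \<noteq> 0"
    and "\<And>m::nat. m \<ge> 1 \<Longrightarrow> q ^ m \<noteq> 1"
    and "k \<noteq> -1"
  shows "WP_Bailey_pair 1 k q
     (\<lambda>n. if n = 0 then 1 else (-1) ^ n * (inverse (q ^ n) + q ^ n))
     (\<lambda>n. if n = 0 then 1 else
        (-1) ^ n * (qpoch (k^2) (q^2) n * (1 + k * q ^ (2*n))) /
        ((1 + k) * q ^ n * qpoch (q^2) (q^2) n))"
proof -
  have alpha: "(\<lambda>n. if n = 0 then 1 else (-1) ^ n * (inverse (q ^ n) + q ^ n)) = alpha_one q"
    by (simp add: fun_eq_iff alpha_one_def)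
  have "1 + k \<noteq> 0"
    using assms(3) by (metis add.commute add_eq_0_iff)
  then show ?thesis
    unfolding WP_Bailey_pair_def alpha
    using WP_Bailey_sum_alpha_one[OF assms] by (simp add: alpha_one_def)
qed

end
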